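(* Let $0<s<1$ and $\mathcal{D}_{<s}=\mathcal{D}_{\leq s}\setminus\mathcal{D}_s=\{x\in2^\omega:dim(x)<s\}$. If $f$ is a gauge function such that $x^{-1}f(x)$ is monotonically decreasing, then $H^f(\mathcal{D}_{<s})=0$ if and only if $f(x)\leq^* x^r$ for every $r\in(0,s)$. Moreover, $\mathcal{D}_{<s}$ has Hausdorff dimension $s$ and $H^s(\mathcal{D}_{<s})=0$, where $H^s=H^{f}$ for $f(x)=x^s$.
   Context: A gauge function is a continuous non-decreasing $f:\mathbb{R}^+\to\mathbb{R}^+$ with $\lim_{x\to0^+}f(x)=0$. For $A\subseteq2^\omega$, $H^f(A)=\lim_{n\to\infty}\inf\{\sum_i f(2^{-|\sigma_i|}):\bigcup_i[\sigma_i]\supseteq A,\ \forall i\ |\sigma_i|\geq n\}$, where $[\sigma]$ is the set of infinite binary sequences extending the finite string $\sigma$. $f(x)\leq^* g(x)$ means there is $\delta>0$ with $f(x)\leq g(x)$ for all $x\in(0,\delta)$. $K$ is prefix-free Kolmogorov complexity, $dim(x)=\liminf_{n\to\infty}K(x\upharpoonright n)/n$ for $x\in2^\omega$, $\mathcal{D}_s=\{x:dim(x)=s\}$, $\mathcal{D}_{\le s}=\{x:dim(x)\le s\}$. *)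

theory Defs
  imports Complex_Main "HOL-Library.Extended_Real" "HOL-Analysis.Analysis"
begin

type_synonym seq = "nat \<Rightarrow> bool"

definition cyl :: "bool list \<Rightarrow> seq set" where
  "cyl \<sigma> = {x. \<forall>i<length \<sigma>. x i = \<sigma> ! i}"

definition restr :: "seq \<Rightarrow> nat \<Rightarrow> bool list" where
  "restr x n = map x [0..<n]"

definition gauge :: "(real \<Rightarrow> real) \<Rightarrow> bool" where
  "gauge f \<longleftrightarrow> continuous_on {0<..} f \<and> mono_on {0<..} f \<and>
     (\<forall>x>0. f x > 0) \<and> (f \<longlongrightarrow> 0) (at_right 0)"

definition hausdorff :: "(real \<Rightarrow> real) \<Rightarrow> seq set \<Rightarrow> ennreal" where
  "hausdorff f A = (SUP n. INF S \<in> {S. A \<subseteq> (\<Union>\<sigma>\<in>S. cyl \<sigma>) \<and> (\<forall>\<sigma>\<in>S. length \<sigma> \<ge> n)}.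
      (\<Sum>\<^sub>\<infinity>\<sigma>\<in>S. ennreal (f (2 powr (- real (length \<sigma>))))))"

definition le_star :: "(real \<Rightarrow> real) \<Rightarrow> (real \<Rightarrow> real) \<Rightarrow> bool" where
  "le_star f g \<longleftrightarrow> (\<exists>\<delta>>0. \<forall>x. 0 < x \<and> x < \<delta> \<longrightarrow> f x \<le> g x)"

definition hdim :: "seq set \<Rightarrow> real" where
  "hdim A = Inf {t. t \<ge> 0 \<and> hausdorff (\<lambda>x. x powr t) A = 0}"

datatype recf = Z | S | Proj nat | Comp recf "recf list" | Prec recf recf | Mu recf

inductive eval :: "recf \<Rightarrow> nat list \<Rightarrow> nat \<Rightarrow> bool" where
  eval_Z: "eval Z xs 0"
| eval_S: "eval S (x # xs) (Suc x)"
| eval_Proj: "i < length xs \<Longrightarrow> eval (Proj i) xs (xs ! i)"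
| eval_Comp: "length ys = length gs \<Longrightarrow> (\<forall>i<length gs. eval (gs ! i) xs (ys ! i)) \<Longrightarrow>
     eval f ys z \<Longrightarrow> eval (Comp f gs) xs z"
| eval_Prec0: "eval f xs z \<Longrightarrow> eval (Prec f g) (0 # xs) z"
| eval_PrecS: "eval (Prec f g) (n # xs) r \<Longrightarrow> eval g (r # n # xs) z \<Longrightarrow>
     eval (Prec f g) (Suc n # xs) z"
| eval_Mu: "eval f (n # xs) 0 \<Longrightarrow> (\<forall>m<n. \<exists>y. y \<noteq> 0 \<and> eval f (m # xs) y) \<Longrightarrow>
     eval (Mu f) xs n"

text \<open>Bijective binary coding of binary strings by natural numbers.\<close>
primrec enc :: "bool list \<Rightarrow> nat" where
  "enc [] = 0"
| "enc (b # bs) = (if b then 2 else 1) + 2 * enc bs"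

definition runs :: "recf \<Rightarrow> bool list \<Rightarrow> bool list \<Rightarrow> bool" where
  "runs M p q \<longleftrightarrow> eval M [enc p] (enc q)"

definition prefix_free_machine :: "recf \<Rightarrow> bool" where
  "prefix_free_machine M \<longleftrightarrow>
     (\<forall>p p' q q'. runs M p q \<and> runs M p' q' \<and> (\<exists>r. p' = p @ r) \<longrightarrow> p = p')"

definition KM :: "recf \<Rightarrow> bool list \<Rightarrow> enat" where
  "KM M \<sigma> = (INF p \<in> {p. runs M p \<sigma>}. enat (length p))"

definition optimal_pf :: "recf \<Rightarrow> bool" where
  "optimal_pf U \<longleftrightarrow> prefix_free_machine U \<and>
     (\<forall>M. prefix_free_machine M \<longrightarrow> (\<exists>c::nat. \<forall>\<sigma>. KM U \<sigma> \<le> KM M \<sigma> + enat c))"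

text \<open>Prefix-free Kolmogorov complexity relative to U (finite for optimal U).\<close>
definition K :: "recf \<Rightarrow> bool list \<Rightarrow> nat" where
  "K U \<sigma> = the_enat (KM U \<sigma>)"

definition dim :: "recf \<Rightarrow> seq \<Rightarrow> ereal" where
  "dim U x = liminf (\<lambda>n. ereal (real (K U (restr x n)) / real n))"

definition D_lt :: "recf \<Rightarrow> real \<Rightarrow> seq set" where
  "D_lt U s = {x. dim U x < ereal s}"

end

theory Submission
  imports Defs "HOL-Library.Sublist" "HOL-Library.Log_Nat"
begin

text \<open>Upper bound: a sequence of dimension below s has, for some a < s, infinitely many prefixes
  \<sigma> with K(\<sigma>) < a |\<sigma>|, so these prefixes cover D_<s. If f(x) \<le> x^b near 0 with a < b < s,
  every long such \<sigma> has weight f(2^-|\<sigma>|) \<le> \<epsilon> 2^-K(\<sigma>), and Kraft's inequality bounds the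
  weight of the cover by \<epsilon>.

  Lower bound: if f(x) > x^r for arbitrarily small x and some r < s, choose rapidly increasing
  scales a_j where this happens and let E be the set of sequences vanishing outside the blocks
  [a_j, a_j + r a_(j+1)). The prefix of length a_(j+1) of a sequence in E is a string of length
  about r a_(j+1) padded with zeros, which a fixed prefix-free decoder describes with logarithmic
  overhead, so E \<subseteq> D_<s. The uniform measure on E gives every cylinder of length n mass at most
  f(2^-n)/c, hence H^f(E) \<ge> c > 0 by the mass distribution principle. The statements about H^s
  and the Hausdorff dimension are the case f(x) = x^t.\<close>

lemma enc_append: "enc (u @ v) = enc u + 2 ^ length u * enc v"
  by (induction u) (auto simp: algebra_simps)

lemma enc_bounds: "2 ^ length u \<le> enc u + 1 \<and> enc u + 1 < 2 ^ Suc (length u)"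
  by (induction u) auto

lemma length_eq_if_enc_bounds:
  assumes "2 ^ k \<le> enc u + 1" and "enc u + 1 < 2 ^ Suc k"
  shows "length u = k"
proof -
  have "(2::nat) ^ k < 2 ^ Suc (length u)" "(2::nat) ^ length u < 2 ^ Suc k"
    using assms enc_bounds[of u] by linarith+
  then show ?thesis by (simp only: power_strict_increasing_iff)
qed

lemma enc_eq_iff [simp]: "enc u = enc v \<longleftrightarrow> u = v"
proof (induction u arbitrary: v)
  case Nil then show ?case by (cases v) auto
next
  case (Cons a u)
  show ?case
  proof (cases v)
    case (Cons b v')
    have "enc (a # u) = enc (b # v') \<longleftrightarrow> a = b \<and> enc u = enc v'" by (cases a; cases b; simp; presburger)
    then show ?thesis using Cons.IH Cons by simp
  qed simp
qed

lemma enc_surj: "surj enc"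
proof -
  have "\<exists>u. enc u = n" for n
  proof (induction n rule: less_induct)
    case (less n)
    consider "n = 0" | "odd n" | "even n" "n \<noteq> 0" by blast
    then show ?case
    proof cases
      case 1 then show ?thesis by (intro exI[of _ "[]"]) simp
    next
      case 2
      have "(n - 1) div 2 < n" using 2 by (cases n) auto
      then obtain u where "enc u = (n - 1) div 2" using less by blast
      then have "enc (False # u) = n" using 2 by simp
      then show ?thesis ..
    next
      case 3
      have "(n - 2) div 2 < n" using 3 by simp
      then obtain u where "enc u = (n - 2) div 2" using less by blast
      then have "enc (True # u) = n" using 3 by simp presburger
      then show ?thesis ..
    qed
  qed
  then show ?thesis by (metis surjI)
qed

lemma enc_of_length_exists:
  assumes "x < 2 ^ c"
  shows "\<exists>u. length u = c \<and> enc u = x + 2 ^ c - 1"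
proof -
  obtain u where u: "enc u = x + 2 ^ c - 1" using enc_surj by (metis surjD)
  then have "length u = c" using assms by (intro length_eq_if_enc_bounds) auto
  then show ?thesis using u by blast
qed

lemma enc_replicate_False: "enc (replicate m False) + 1 = 2 ^ m"
  by (induction m) auto

lemma odd_enc_iff: "odd (enc p) \<longleftrightarrow> p \<noteq> [] \<and> \<not> hd p"
  by (cases p) auto

definition tl_code :: "nat \<Rightarrow> nat" where
  "tl_code x = (x - 1) div 2"

definition drop_code :: "nat \<Rightarrow> nat \<Rightarrow> nat" where
  "drop_code k = tl_code ^^ k"

lemma tl_code_enc: "tl_code (enc p) = enc (tl p)"
  by (cases p) (auto simp: tl_code_def)

lemma drop_code_enc: "drop_code k (enc p) = enc (drop k p)"
  by (induction k) (auto simp: drop_code_def tl_code_enc drop_Suc tl_drop)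

section \<open>Total functions computed by recursive programs\<close>

inductive_cases eval_ZE: "eval Z xs z"
inductive_cases eval_SE: "eval S xs z"
inductive_cases eval_ProjE: "eval (Proj i) xs z"
inductive_cases eval_CompE: "eval (Comp f gs) xs z"
inductive_cases eval_PrecE: "eval (Prec f g) xs z"
inductive_cases eval_MuE: "eval (Mu f) xs z"

lemma eval_deterministic: "eval f xs z \<Longrightarrow> eval f xs z' \<Longrightarrow> z = z'"
proof (induction f xs z arbitrary: z' rule: eval.induct)
  case (eval_Comp ys gs xs f z)
  from eval_Comp.prems obtain ys' where ys': "length ys' = length gs"
    "\<forall>i<length gs. eval (gs ! i) xs (ys' ! i)" "eval f ys' z'"
    by (auto elim: eval_CompE)
  have "ys = ys'"
    using eval_Comp.hyps(1) eval_Comp.IH(1) ys'(1,2) by (auto intro: nth_equalityI)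
  then show ?case using eval_Comp.IH(2) ys'(3) by simp
next
  case (eval_Prec0 f xs z g)
  from eval_Prec0.prems show ?case by (rule eval_PrecE) (use eval_Prec0.IH in auto)
next
  case (eval_PrecS f g n xs r z)
  from eval_PrecS.prems show ?case by (rule eval_PrecE) (use eval_PrecS.IH in blast)+
next
  case (eval_Mu f n xs)
  from eval_Mu.prems have "eval f (z' # xs) 0" "\<forall>m<z'. \<exists>y. y \<noteq> 0 \<and> eval f (m # xs) y"
    by (rule eval_MuE, blast)+
  with eval_Mu.IH show ?case by (metis linorder_cases)
qed (auto elim: eval_ZE eval_SE eval_ProjE)

definition computes :: "recf \<Rightarrow> nat \<Rightarrow> (nat list \<Rightarrow> nat) \<Rightarrow> bool" where
  "computes F n g \<longleftrightarrow> (\<forall>xs. length xs = n \<longrightarrow> eval F xs (g xs))"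

lemma computes_eval_iff: "computes F n g \<Longrightarrow> length xs = n \<Longrightarrow> eval F xs z \<longleftrightarrow> z = g xs"
  unfolding computes_def using eval_deterministic by blast

lemma computes_cong:
  "computes F n g \<Longrightarrow> (\<And>xs. length xs = n \<Longrightarrow> g xs = g' xs) \<Longrightarrow> computes F n g'"
  unfolding computes_def by metis

lemma computes_Z: "computes Z n (\<lambda>_. 0)"
  unfolding computes_def by (auto intro: eval_Z)

lemma computes_S: "computes S 1 (\<lambda>xs. Suc (xs ! 0))"
  unfolding computes_def by (auto simp: length_Suc_conv intro: eval_S)

lemma computes_Proj: "i < n \<Longrightarrow> computes (Proj i) n (\<lambda>xs. xs ! i)"
  unfolding computes_def by (auto intro: eval_Proj)

lemma computes_Comp1:
  "computes f 1 g \<Longrightarrow> computes G n h \<Longrightarrow> computes (Comp f [G]) n (\<lambda>xs. g [h xs])"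
  unfolding computes_def by (auto intro!: eval_Comp[where ys="[_]"] simp: less_Suc_eq)

lemma computes_Comp2:
  "computes f 2 g \<Longrightarrow> computes G1 n h1 \<Longrightarrow> computes G2 n h2 \<Longrightarrow>
   computes (Comp f [G1, G2]) n (\<lambda>xs. g [h1 xs, h2 xs])"
  unfolding computes_def numeral_2_eq_2
  by (auto intro!: eval_Comp[where ys="[_, _]"] simp: less_Suc_eq nth_Cons')

lemma computes_Prec:
  assumes f: "computes f n g" and h: "computes h (Suc (Suc n)) k"
    and F0: "\<And>ys. length ys = n \<Longrightarrow> F (0 # ys) = g ys"
    and FS: "\<And>i ys. length ys = n \<Longrightarrow> F (Suc i # ys) = k (F (i # ys) # i # ys)"
  shows "computes (Prec f h) (Suc n) F"
  unfolding computes_def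
proof (intro allI impI)
  fix xs :: "nat list" assume "length xs = Suc n"
  then obtain i ys where xs: "xs = i # ys" "length ys = n" by (cases xs) auto
  have "eval (Prec f h) (i # ys) (F (i # ys))"
  proof (induction i)
    case 0 then show ?case using f xs(2) F0 by (simp add: computes_def eval_Prec0)
  next
    case (Suc i)
    have "eval h (F (i # ys) # i # ys) (k (F (i # ys) # i # ys))"
      using h xs(2) by (simp add: computes_def)
    then show ?case using Suc FS xs(2) by (simp add: eval_PrecS)
  qed
  then show "eval (Prec f h) xs (F xs)" using xs by simp
qed

lemma eval_Comp2_iff:
  "eval (Comp f [G1, G2]) xs z \<longleftrightarrow> (\<exists>y1 y2. eval G1 xs y1 \<and> eval G2 xs y2 \<and> eval f [y1, y2] z)"
proof
  assume "eval (Comp f [G1, G2]) xs z"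
  then show "\<exists>y1 y2. eval G1 xs y1 \<and> eval G2 xs y2 \<and> eval f [y1, y2] z"
    by (rule eval_CompE) (auto simp: length_Suc_conv, metis nth_Cons_0 nth_Cons_Suc zero_less_Suc lessI)
qed (auto intro!: eval_Comp[where ys="[_, _]"] simp: less_Suc_eq nth_Cons')

lemma eval_Mu_iff:
  assumes "computes F (Suc n) g" and "length xs = n"
  shows "eval (Mu F) xs z \<longleftrightarrow> g (z # xs) = 0 \<and> (\<forall>m<z. g (m # xs) \<noteq> 0)"
proof
  assume "eval (Mu F) xs z"
  then show "g (z # xs) = 0 \<and> (\<forall>m<z. g (m # xs) \<noteq> 0)"
    by (rule eval_MuE) (use assms computes_eval_iff in fastforce)
next
  have "eval F (m # xs) (g (m # xs))" for m using assms by (simp add: computes_def)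
  then show "g (z # xs) = 0 \<and> (\<forall>m<z. g (m # xs) \<noteq> 0) \<Longrightarrow> eval (Mu F) xs z"
    by (intro eval_Mu) (metis, blast)
qed

definition rf_add :: recf where "rf_add = Prec (Proj 0) (Comp S [Proj 0])"
definition rf_mul :: recf where "rf_mul = Prec Z (Comp rf_add [Proj 0, Proj 2])"
definition rf_pred :: recf where "rf_pred = Prec Z (Proj 1)"
definition rf_rsub :: recf where "rf_rsub = Prec (Proj 0) (Comp rf_pred [Proj 0])"
definition rf_sub :: recf where "rf_sub = Comp rf_rsub [Proj 1, Proj 0]"
definition rf_pow2 :: recf where "rf_pow2 = Prec (Comp S [Z]) (Comp rf_add [Proj 0, Proj 0])"
definition rf_mod2 :: recf where "rf_mod2 = Prec Z (Comp rf_rsub [Proj 0, Comp S [Z]])"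
definition rf_div2 :: recf where "rf_div2 = Prec Z (Comp rf_add [Proj 0, Comp rf_mod2 [Proj 1]])"
definition rf_tl :: recf where "rf_tl = Comp rf_div2 [Comp rf_pred [Proj 0]]"
definition rf_drop :: recf where "rf_drop = Prec (Proj 0) (Comp rf_tl [Proj 0])"

lemma length_Suc_0_iff: "length xs = Suc 0 \<longleftrightarrow> (\<exists>a. xs = [a])"
  by (cases xs) auto

lemma computes_rf_add: "computes rf_add 2 (\<lambda>xs. xs ! 0 + xs ! 1)"
  unfolding rf_add_def numeral_2_eq_2
  by (rule computes_Prec[OF computes_Proj computes_Comp1[OF computes_S computes_Proj]])
    (auto simp: length_Suc_0_iff)

lemma computes_rf_mul: "computes rf_mul 2 (\<lambda>xs. xs ! 0 * xs ! 1)"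
  unfolding rf_mul_def numeral_2_eq_2
  by (rule computes_Prec[OF computes_Z computes_Comp2[OF computes_rf_add computes_Proj computes_Proj]])
    (auto simp: length_Suc_0_iff)

lemma computes_rf_pred: "computes rf_pred 1 (\<lambda>xs. xs ! 0 - 1)"
  unfolding rf_pred_def One_nat_def by (rule computes_Prec[OF computes_Z computes_Proj]) auto

lemma computes_rf_rsub: "computes rf_rsub 2 (\<lambda>xs. xs ! 1 - xs ! 0)"
  unfolding rf_rsub_def numeral_2_eq_2
  by (rule computes_Prec[OF computes_Proj computes_Comp1[OF computes_rf_pred computes_Proj]])
    (auto simp: length_Suc_0_iff)

lemma computes_rf_sub: "computes rf_sub 2 (\<lambda>xs. xs ! 0 - xs ! 1)"
  unfolding rf_sub_def
  by (rule computes_cong[OF computes_Comp2[OF computes_rf_rsub computes_Proj computes_Proj]]) auto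

lemma computes_rf_pow2: "computes rf_pow2 1 (\<lambda>xs. 2 ^ (xs ! 0))"
  unfolding rf_pow2_def One_nat_def
  by (rule computes_Prec[OF computes_cong[OF computes_Comp1[OF computes_S computes_Z]]
        computes_Comp2[OF computes_rf_add computes_Proj computes_Proj]]) auto

lemma computes_rf_mod2: "computes rf_mod2 1 (\<lambda>xs. xs ! 0 mod 2)"
  unfolding rf_mod2_def One_nat_def
  by (rule computes_Prec[OF computes_Z
        computes_Comp2[OF computes_rf_rsub computes_Proj computes_Comp1[OF computes_S computes_Z]]])
    (auto simp: mod_Suc)

lemma computes_rf_div2: "computes rf_div2 1 (\<lambda>xs. xs ! 0 div 2)"
  unfolding rf_div2_def One_nat_def
  by (rule computes_Prec[OF computes_Z
        computes_Comp2[OF computes_rf_add computes_Proj computes_Comp1[OF computes_rf_mod2 computes_Proj]]])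
    (auto, presburger)

lemma computes_rf_tl: "computes rf_tl 1 (\<lambda>xs. tl_code (xs ! 0))"
  unfolding rf_tl_def tl_code_def
  by (rule computes_cong[OF computes_Comp1[OF computes_rf_div2 computes_Comp1[OF computes_rf_pred computes_Proj]]])
    auto

lemma computes_rf_drop: "computes rf_drop 2 (\<lambda>xs. drop_code (xs ! 0) (xs ! 1))"
  unfolding rf_drop_def numeral_2_eq_2
  by (rule computes_Prec[OF computes_Proj computes_Comp1[OF computes_rf_tl computes_Proj]])
    (auto simp: length_Suc_0_iff drop_code_def)

lemmas computes_intros = computes_Z computes_S computes_Proj computes_Comp1 computes_Comp2
  computes_rf_add computes_rf_mul computes_rf_sub computes_rf_rsub computes_rf_pow2
  computes_rf_mod2 computes_rf_drop

section \<open>A prefix-free decoder for padded strings\<close>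

text \<open>The decoder reads a program \<open>1\<^sup>c 0 u\<^sub>1 u\<^sub>2 w\<close> with \<open>|u\<^sub>1| = |u\<^sub>2| = c\<close>, where
  \<open>enc u\<^sub>1 = |w| + 2\<^sup>c - 1\<close> and \<open>enc u\<^sub>2 = m + 2\<^sup>c - 1\<close>, and outputs \<open>w 0\<^sup>m\<close>. The unbounded search
  finds \<open>c\<close>; the guard diverges unless the program has exactly the announced length, which
  makes the decoder prefix-free. All arithmetic is on codes \<open>e = enc p\<close>: codes of the pieces are
  recovered from codes of suffixes by \<open>enc (u @ v) = enc u + 2\<^bsup>|u|\<^esup> enc v\<close>, and the two truncated
  differences in \<^term>\<open>dec_check\<close> vanish iff the part after \<open>1\<^sup>c 0\<close> has exactly \<open>2c + |w|\<close> bits.\<close>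

definition rf_suffix1 :: recf where
  "rf_suffix1 = Comp rf_drop [Comp S [Proj 0], Proj 1]"
definition rf_suffix2 :: recf where
  "rf_suffix2 = Comp rf_drop [Comp S [Comp rf_add [Proj 0, Proj 0]], Proj 1]"
definition rf_suffix3 :: recf where
  "rf_suffix3 = Comp rf_drop [Comp S [Comp rf_add [Proj 0, Comp rf_add [Proj 0, Proj 0]]], Proj 1]"
definition rf_pow_c :: recf where
  "rf_pow_c = Comp rf_pow2 [Proj 0]"
definition rf_len_w :: recf where
  "rf_len_w = Comp rf_sub [Comp S [Comp rf_sub [rf_suffix1, Comp rf_mul [rf_pow_c, rf_suffix2]]], rf_pow_c]"
definition rf_zeros :: recf where
  "rf_zeros = Comp rf_sub [Comp S [Comp rf_sub [rf_suffix2, Comp rf_mul [rf_pow_c, rf_suffix3]]], rf_pow_c]"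
definition rf_len_rest :: recf where
  "rf_len_rest = Comp rf_add [Comp rf_add [Proj 0, Proj 0], rf_len_w]"
definition rf_check :: recf where
  "rf_check = Comp rf_add [Comp rf_sub [Comp rf_pow2 [rf_len_rest], Comp S [rf_suffix1]],
     Comp rf_sub [Comp S [Comp S [rf_suffix1]], Comp rf_pow2 [Comp S [rf_len_rest]]]]"
definition rf_output :: recf where
  "rf_output = Comp rf_add [rf_suffix3,
     Comp rf_sub [Comp rf_mul [Comp rf_pow2 [rf_len_w], Comp rf_pow2 [rf_zeros]], Comp rf_pow2 [rf_len_w]]]"
definition rf_first_zero :: recf where
  "rf_first_zero = Mu (Comp rf_rsub [Comp rf_mod2 [rf_drop], Comp S [Z]])"
definition decoder :: recf where
  "decoder = Comp (Comp rf_add [rf_output, Mu (Comp rf_check [Proj 1, Proj 2])]) [rf_first_zero, Proj 0]"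

definition dec_u1 :: "nat \<Rightarrow> nat \<Rightarrow> nat" where
  "dec_u1 c e = drop_code (Suc c) e - 2 ^ c * drop_code (Suc (c + c)) e"
definition dec_u2 :: "nat \<Rightarrow> nat \<Rightarrow> nat" where
  "dec_u2 c e = drop_code (Suc (c + c)) e - 2 ^ c * drop_code (Suc (c + (c + c))) e"
definition dec_len_w :: "nat \<Rightarrow> nat \<Rightarrow> nat" where
  "dec_len_w c e = Suc (dec_u1 c e) - 2 ^ c"
definition dec_zeros :: "nat \<Rightarrow> nat \<Rightarrow> nat" where
  "dec_zeros c e = Suc (dec_u2 c e) - 2 ^ c"
definition dec_check :: "nat \<Rightarrow> nat \<Rightarrow> nat" where
  "dec_check c e = (2 ^ (c + c + dec_len_w c e) - Suc (drop_code (Suc c) e)) +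
     (Suc (Suc (drop_code (Suc c) e)) - 2 ^ Suc (c + c + dec_len_w c e))"
definition dec_output :: "nat \<Rightarrow> nat \<Rightarrow> nat" where
  "dec_output c e = drop_code (Suc (c + (c + c))) e + (2 ^ dec_len_w c e * 2 ^ dec_zeros c e - 2 ^ dec_len_w c e)"

lemma computes_rf_check: "computes rf_check 2 (\<lambda>xs. dec_check (xs ! 0) (xs ! 1))"
  unfolding rf_check_def rf_len_rest_def rf_len_w_def rf_pow_c_def rf_suffix1_def rf_suffix2_def
  by (rule computes_cong, (rule computes_intros | simp)+) (simp add: dec_check_def dec_len_w_def dec_u1_def)

lemma computes_rf_output: "computes rf_output 2 (\<lambda>xs. dec_output (xs ! 0) (xs ! 1))"
  unfolding rf_output_def rf_zeros_def rf_len_w_def rf_pow_c_def rf_suffix1_def rf_suffix2_def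
    rf_suffix3_def
  by (rule computes_cong, (rule computes_intros | simp)+)
    (simp add: dec_output_def dec_len_w_def dec_zeros_def dec_u1_def dec_u2_def)

lemma eval_guard_iff: "eval (Mu (Comp rf_check [Proj 1, Proj 2])) [c, e] g \<longleftrightarrow> g = 0 \<and> dec_check c e = 0"
proof -
  have "computes (Comp rf_check [Proj 1, Proj 2]) 3 (\<lambda>xs. dec_check (xs ! 1) (xs ! 2))"
    by (rule computes_cong, (rule computes_intros computes_rf_check | simp)+)
  from eval_Mu_iff[OF this[unfolded numeral_3_eq_3], of "[c, e]" g] show ?thesis by auto
qed

lemma eval_first_zero_iff:
  "eval rf_first_zero [e] c \<longleftrightarrow> odd (drop_code c e) \<and> (\<forall>m<c. even (drop_code m e))"
proof -
  have "computes (Comp rf_rsub [Comp rf_mod2 [rf_drop], Comp S [Z]]) 2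
      (\<lambda>xs. 1 - drop_code (xs ! 0) (xs ! 1) mod 2)"
    by (rule computes_cong, (rule computes_intros | simp)+)
  then show ?thesis
    unfolding rf_first_zero_def using eval_Mu_iff[of _ 1 _ "[e]" c]
    by (simp add: numeral_2_eq_2 dvd_eq_mod_eq_0 Suc_le_eq)
qed

lemma eval_decoder_iff: "eval decoder [e] z \<longleftrightarrow>
   (\<exists>c. odd (drop_code c e) \<and> (\<forall>m<c. even (drop_code m e)) \<and> dec_check c e = 0 \<and> z = dec_output c e)"
proof -
  have "eval (Proj 0) [e] y \<longleftrightarrow> y = e" for y
    using computes_eval_iff[OF computes_Proj[of 0 1], of "[e]"] by simp
  moreover have "eval rf_output [c, e] y \<longleftrightarrow> y = dec_output c e" for c y
    using computes_eval_iff[OF computes_rf_output, of "[c, e]"] by simp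
  moreover have "eval rf_add [x, y] z \<longleftrightarrow> z = x + y" for x y z
    using computes_eval_iff[OF computes_rf_add, of "[x, y]"] by simp
  ultimately show ?thesis
    unfolding decoder_def eval_Comp2_iff eval_guard_iff eval_first_zero_iff by auto
qed

definition descr :: "nat \<Rightarrow> bool list \<Rightarrow> bool list \<Rightarrow> bool list \<Rightarrow> bool list" where
  "descr c u1 u2 w = replicate c True @ False # u1 @ u2 @ w"

definition descr_ok :: "nat \<Rightarrow> bool list \<Rightarrow> bool list \<Rightarrow> bool list \<Rightarrow> bool" where
  "descr_ok c u1 u2 w \<longleftrightarrow> length u1 = c \<and> length u2 = c \<and> length w + 2 ^ c = Suc (enc u1)"

definition descr_output :: "nat \<Rightarrow> bool list \<Rightarrow> bool list \<Rightarrow> bool list" where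
  "descr_output c u2 w = w @ replicate (Suc (enc u2) - 2 ^ c) False"

lemma dec_descr:
  assumes "length u1 = c" "length u2 = c"
  shows "dec_u1 c (enc (descr c u1 u2 w)) = enc u1" "dec_u2 c (enc (descr c u1 u2 w)) = enc u2"
    "drop_code (Suc c) (enc (descr c u1 u2 w)) = enc (u1 @ u2 @ w)"
    "drop_code (Suc (c + (c + c))) (enc (descr c u1 u2 w)) = enc w"
proof -
  have "drop (Suc c) (descr c u1 u2 w) = u1 @ u2 @ w"
    "drop (Suc (c + c)) (descr c u1 u2 w) = u2 @ w"
    "drop (Suc (c + (c + c))) (descr c u1 u2 w) = w"
    using assms by (simp_all add: descr_def)
  then show "dec_u1 c (enc (descr c u1 u2 w)) = enc u1" "dec_u2 c (enc (descr c u1 u2 w)) = enc u2"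
    "drop_code (Suc c) (enc (descr c u1 u2 w)) = enc (u1 @ u2 @ w)"
    "drop_code (Suc (c + (c + c))) (enc (descr c u1 u2 w)) = enc w"
    using assms by (simp_all add: dec_u1_def dec_u2_def drop_code_enc enc_append)
qed

lemma runs_decoder_descr:
  assumes "descr_ok c u1 u2 w"
  shows "runs decoder (descr c u1 u2 w) (descr_output c u2 w)"
proof -
  let ?e = "enc (descr c u1 u2 w)"
  have l: "length u1 = c" "length u2 = c" "length w + 2 ^ c = Suc (enc u1)"
    using assms by (auto simp: descr_ok_def)
  note dec = dec_descr[OF l(1,2), of w]
  have odd: "odd (drop_code c ?e)"
    by (simp add: drop_code_enc descr_def odd_enc_iff)
  have even: "\<forall>m<c. even (drop_code m ?e)"
  proof (intro allI impI)
    fix m assume "m < c"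
    then have "c - m = Suc (c - Suc m)" by simp
    then have "drop m (descr c u1 u2 w) = True # replicate (c - Suc m) True @ False # u1 @ u2 @ w"
      using \<open>m < c\<close> by (simp add: descr_def)
    then show "even (drop_code m ?e)" by (simp add: drop_code_enc)
  qed
  have len_w: "dec_len_w c ?e = length w" using l(3) by (simp add: dec_len_w_def dec)
  have "length (u1 @ u2 @ w) = c + c + dec_len_w c ?e" using l len_w by simp
  then have check: "dec_check c ?e = 0"
    using enc_bounds[of "u1 @ u2 @ w"] unfolding dec_check_def dec(3) by simp
  have "enc (descr_output c u2 w) = dec_output c ?e"
  proof -
    let ?m = "Suc (enc u2) - 2 ^ c"
    have "enc (descr_output c u2 w) = enc w + 2 ^ length w * (2 ^ ?m - 1)"
      using enc_replicate_False[of ?m] by (simp add: descr_output_def enc_append)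
    then show ?thesis by (simp add: dec_output_def len_w dec_zeros_def dec right_diff_distrib')
  qed
  then show ?thesis unfolding runs_def eval_decoder_iff using odd even check by metis
qed

lemma first_zero_split:
  assumes "odd (drop_code c (enc p))" and "\<forall>m<c. even (drop_code m (enc p))"
  shows "p = replicate c True @ False # drop (Suc c) p"
proof -
  have dc: "drop c p \<noteq> []" "\<not> hd (drop c p)" using assms(1) by (auto simp: drop_code_enc odd_enc_iff)
  then have "c < length p" by simp
  have "take c p = replicate c True"
  proof (rule nth_equalityI)
    fix m assume "m < length (take c p)"
    then have m: "m < c" "m < length p" using \<open>c < length p\<close> by auto
    have "even (enc (drop m p))" using assms(2) m by (simp add: drop_code_enc)
    then have "hd (drop m p)" using odd_enc_iff[of "drop m p"] m(2) by auto
    then show "take c p ! m = replicate c True ! m" using m by (simp add: hd_drop_conv_nth)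
  qed (use \<open>c < length p\<close> in simp)
  moreover have "drop c p = False # drop (Suc c) p"
    using dc(2) \<open>c < length p\<close> by (metis (full_types) Cons_nth_drop_Suc hd_drop_conv_nth)
  ultimately show ?thesis by (metis append_take_drop_id)
qed

lemma runs_decoder_imp_descr:
  assumes "runs decoder p q"
  shows "\<exists>c u1 u2 w. descr_ok c u1 u2 w \<and> p = descr c u1 u2 w \<and> q = descr_output c u2 w"
proof -
  let ?e = "enc p"
  from assms obtain c where c: "odd (drop_code c ?e)" "\<forall>m<c. even (drop_code m ?e)" "dec_check c ?e = 0"
    unfolding runs_def eval_decoder_iff by blast
  define rest where "rest = drop (Suc c) p"
  have p: "p = replicate c True @ False # rest" using first_zero_split[OF c(1,2)] by (simp add: rest_def)
  have "2 ^ (c + c + dec_len_w c ?e) \<le> enc rest + 1" "enc rest + 1 < 2 ^ Suc (c + c + dec_len_w c ?e)"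
    using c(3) unfolding dec_check_def drop_code_enc rest_def[symmetric] by linarith+
  then have len_rest: "length rest = c + c + dec_len_w c ?e" by (rule length_eq_if_enc_bounds)
  define u1 u2 w where "u1 = take c rest" and "u2 = take c (drop c rest)" and "w = drop (c + c) rest"
  have l: "length u1 = c" "length u2 = c" using len_rest by (auto simp: u1_def u2_def)
  have "rest = u1 @ u2 @ w" unfolding u1_def u2_def w_def
    by (metis append_take_drop_id drop_drop)
  then have p_descr: "p = descr c u1 u2 w" using p by (simp add: descr_def)
  note dec = dec_descr[OF l, of w, folded p_descr]
  have "length w = dec_len_w c ?e" using len_rest by (simp add: w_def)
  then have ok: "descr_ok c u1 u2 w"
    using l enc_bounds[of u1] by (simp add: descr_ok_def dec_len_w_def dec)
  then have "enc q = enc (descr_output c u2 w)"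
    using assms runs_decoder_descr p_descr unfolding runs_def by (metis eval_deterministic)
  then have "q = descr_output c u2 w" by simp
  then show ?thesis using ok p_descr by blast
qed

lemma takeWhile_descr: "takeWhile (\<lambda>b. b) (descr c u1 u2 w) = replicate c True"
  by (induction c) (auto simp: descr_def)

lemma prefix_free_decoder: "prefix_free_machine decoder"
  unfolding prefix_free_machine_def
proof (intro allI impI, elim conjE exE)
  fix p p' q q' r
  assume "runs decoder p q" "runs decoder p' q'" and p': "p' = p @ r"
  then obtain c u1 u2 w c' u1' u2' w' where
    ok: "descr_ok c u1 u2 w" "descr_ok c' u1' u2' w'" and
    p: "p = descr c u1 u2 w" "p' = descr c' u1' u2' w'"
    using runs_decoder_imp_descr by metis
  have "False \<in> set p" using p by (simp add: descr_def)
  then have "takeWhile (\<lambda>b. b) p' = takeWhile (\<lambda>b. b) p" using p' by simp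
  then have "c = c'" using p by (simp add: takeWhile_descr)
  have "u1 = take c (drop (Suc c) p)" "u1' = take c (drop (Suc c) p')"
    "take c (drop (Suc c) p') = take c (drop (Suc c) p)"
    using p p' ok \<open>c = c'\<close> by (simp_all add: descr_def descr_ok_def)
  then have "u1 = u1'" by simp
  then have "length p = length p'" using ok p \<open>c = c'\<close> by (simp add: descr_def descr_ok_def)
  then show "p = p'" using p' by simp
qed

lemma decoder_describes_padded:
  assumes "length w < 2 ^ c" "m < 2 ^ c"
  shows "\<exists>p. runs decoder p (w @ replicate m False) \<and> length p = Suc (3 * c + length w)"
proof -
  obtain u1 where u1: "length u1 = c" "enc u1 = length w + 2 ^ c - 1"
    using enc_of_length_exists[OF assms(1)] by blast
  obtain u2 where u2: "length u2 = c" "enc u2 = m + 2 ^ c - 1"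
    using enc_of_length_exists[OF assms(2)] by blast
  have "descr_ok c u1 u2 w" using u1 u2 by (simp add: descr_ok_def)
  moreover have "descr_output c u2 w = w @ replicate m False" using u2 by (simp add: descr_output_def)
  moreover have "length (descr c u1 u2 w) = Suc (3 * c + length w)" using u1 u2 by (simp add: descr_def)
  ultimately show ?thesis using runs_decoder_descr by metis
qed

lemma KM_le_length: "runs M p q \<Longrightarrow> KM M q \<le> enat (length p)"
  unfolding KM_def by (rule INF_lower2[of p]) auto

lemma KM_padded_le:
  assumes "optimal_pf U"
  obtains d where "\<And>w m c. length w < 2 ^ c \<Longrightarrow> m < 2 ^ c \<Longrightarrow>
     KM U (w @ replicate m False) \<le> enat (Suc (3 * c + length w) + d)"
proof -
  obtain d where d: "\<And>\<sigma>. KM U \<sigma> \<le> KM decoder \<sigma> + enat d"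
    using assms prefix_free_decoder unfolding optimal_pf_def by blast
  have "KM U (w @ replicate m False) \<le> enat (Suc (3 * c + length w) + d)"
    if lt: "length w < 2 ^ c" "m < 2 ^ c" for w m c
  proof -
    obtain p where p: "runs decoder p (w @ replicate m False)" "length p = Suc (3 * c + length w)"
      using decoder_describes_padded[OF lt] by blast
    have "KM U (w @ replicate m False) \<le> KM decoder (w @ replicate m False) + enat d" by (rule d)
    also have "\<dots> \<le> enat (length p) + enat d" using KM_le_length[OF p(1)] by (rule add_right_mono)
    finally show ?thesis using p(2) by simp
  qed
  then show ?thesis using that by blast
qed

definition shortest_prog :: "recf \<Rightarrow> bool list \<Rightarrow> bool list" where
  "shortest_prog U \<sigma> = arg_min length (\<lambda>p. runs U p \<sigma>)"

lemma optimal_pf_runs_ex: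
  assumes "optimal_pf U"
  shows "\<exists>p. runs U p \<sigma>"
proof -
  obtain d where d: "\<And>w m c. length w < 2 ^ c \<Longrightarrow> m < 2 ^ c \<Longrightarrow>
      KM U (w @ replicate m False) \<le> enat (Suc (3 * c + length w) + d)"
    using KM_padded_le[OF assms] by blast
  have "KM U \<sigma> \<le> enat (Suc (3 * length \<sigma> + length \<sigma>) + d)"
    using d[of \<sigma> "length \<sigma>" 0] by simp
  then have "KM U \<sigma> \<noteq> \<infinity>" by (cases "KM U \<sigma>") auto
  then show ?thesis unfolding KM_def by (metis INF_empty empty_Collect_eq top_enat_def)
qed

lemma
  assumes "optimal_pf U"
  shows runs_shortest_prog: "runs U (shortest_prog U \<sigma>) \<sigma>"
    and K_eq_length_shortest_prog: "K U \<sigma> = length (shortest_prog U \<sigma>)"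
    and KM_eq_K: "KM U \<sigma> = enat (K U \<sigma>)"
proof -
  obtain p where "runs U p \<sigma>" using optimal_pf_runs_ex[OF assms] by blast
  note min = arg_min_nat_lemma[of "\<lambda>p. runs U p \<sigma>" p length, OF this, folded shortest_prog_def]
  show "runs U (shortest_prog U \<sigma>) \<sigma>" using min by blast
  have KM: "KM U \<sigma> = enat (length (shortest_prog U \<sigma>))"
    unfolding KM_def by (rule antisym) (auto intro!: INF_lower2[of "shortest_prog U \<sigma>"] INF_greatest simp: min)
  then show "K U \<sigma> = length (shortest_prog U \<sigma>)" by (simp add: K_def)
  with KM show "KM U \<sigma> = enat (K U \<sigma>)" by simp
qed

lemma K_padded_le:
  assumes "optimal_pf U"
  obtains d where "\<And>w m c. length w < 2 ^ c \<Longrightarrow> m < 2 ^ c \<Longrightarrow>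
     K U (w @ replicate m False) \<le> Suc (3 * c + length w) + d"
proof -
  obtain d where d: "\<And>w m c. length w < 2 ^ c \<Longrightarrow> m < 2 ^ c \<Longrightarrow>
      KM U (w @ replicate m False) \<le> enat (Suc (3 * c + length w) + d)"
    using KM_padded_le[OF assms] by blast
  show ?thesis by (rule that[of d]) (use d in \<open>simp add: KM_eq_K[OF assms]\<close>)
qed

section \<open>Kraft's inequality\<close>

lemma prefix_iff_eq_or_prefix_snoc:
  "prefix t p \<longleftrightarrow> p = t \<or> prefix (t @ [False]) p \<or> prefix (t @ [True]) p"
proof
  assume "prefix t p"
  then obtain r where "p = t @ r" by (auto simp: prefix_def)
  then show "p = t \<or> prefix (t @ [False]) p \<or> prefix (t @ [True]) p"
  proof (cases r)
    case (Cons b r')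
    then show ?thesis using \<open>p = t @ r\<close> by (cases b) (auto simp: prefix_def)
  qed simp
qed (auto dest: append_prefixD)

lemma kraft_inequality_below:
  fixes P :: "bool list set"
  assumes "finite P" and pf: "\<And>p q. p \<in> P \<Longrightarrow> q \<in> P \<Longrightarrow> prefix p q \<Longrightarrow> p = q"
    and "\<forall>p\<in>P. length p \<le> length t + n"
  shows "(\<Sum>p\<in>{p\<in>P. prefix t p}. (1/2::real) ^ length p) \<le> (1/2) ^ length t"
  using assms(3)
proof (induction n arbitrary: t)
  case 0
  then have "{p\<in>P. prefix t p} \<subseteq> {t}" by (auto simp: prefix_def)
  then have "(\<Sum>p\<in>{p\<in>P. prefix t p}. (1/2::real) ^ length p) \<le> (\<Sum>p\<in>{t}. (1/2) ^ length p)"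
    by (intro sum_mono2) auto
  then show ?case by simp
next
  case (Suc n)
  show ?case
  proof (cases "t \<in> P")
    case True
    then have "{p\<in>P. prefix t p} = {t}" using pf by auto
    then show ?thesis by simp
  next
    case False
    let ?sum = "\<lambda>b. \<Sum>p\<in>{p\<in>P. prefix (t @ [b]) p}. (1/2::real) ^ length p"
    have "{p\<in>P. prefix t p} = {p\<in>P. prefix (t @ [False]) p} \<union> {p\<in>P. prefix (t @ [True]) p}"
      using False prefix_iff_eq_or_prefix_snoc[of t] by auto
    moreover have "{p\<in>P. prefix (t @ [False]) p} \<inter> {p\<in>P. prefix (t @ [True]) p} = {}"
      using prefix_same_cases[of "t @ [False]" _ "t @ [True]"] by auto
    ultimately have "(\<Sum>p\<in>{p\<in>P. prefix t p}. (1/2::real) ^ length p) = ?sum False + ?sum True"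
      using \<open>finite P\<close> by (simp add: sum.union_disjoint)
    also have "\<dots> \<le> (1/2) ^ length (t @ [False]) + (1/2) ^ length (t @ [True])"
      using Suc.prems by (intro add_mono Suc.IH) auto
    finally show ?thesis by simp
  qed
qed

lemma kraft_inequality:
  fixes P :: "bool list set"
  assumes "finite P" and "\<And>p q. p \<in> P \<Longrightarrow> q \<in> P \<Longrightarrow> prefix p q \<Longrightarrow> p = q"
  shows "(\<Sum>p\<in>P. (1/2::real) ^ length p) \<le> 1"
proof -
  have "\<forall>p\<in>P. length p \<le> length [] + Max (length ` P)" using assms(1) by simp
  from kraft_inequality_below[OF assms this] show ?thesis by simp
qed

lemma kraft_inequality_K:
  assumes U: "optimal_pf U" and "finite Q"
  shows "(\<Sum>\<sigma>\<in>Q. (1/2::real) ^ K U \<sigma>) \<le> 1"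
proof -
  have inj: "inj_on (shortest_prog U) Q"
  proof (rule inj_onI)
    fix \<sigma> \<tau> assume "shortest_prog U \<sigma> = shortest_prog U \<tau>"
    then have "eval U [enc (shortest_prog U \<sigma>)] (enc \<sigma>)" "eval U [enc (shortest_prog U \<sigma>)] (enc \<tau>)"
      using runs_shortest_prog[OF U] unfolding runs_def by metis+
    then show "\<sigma> = \<tau>" using eval_deterministic by fastforce
  qed
  have "p = q" if pq: "p \<in> shortest_prog U ` Q" "q \<in> shortest_prog U ` Q" "prefix p q" for p q
  proof -
    obtain \<sigma> \<tau> where "runs U p \<sigma>" "runs U q \<tau>"
      using pq(1,2) runs_shortest_prog[OF U] by blast
    then show "p = q"
      using U \<open>prefix p q\<close> unfolding optimal_pf_def prefix_free_machine_def prefix_def by blast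
  qed
  then have "(\<Sum>p\<in>shortest_prog U ` Q. (1/2::real) ^ length p) \<le> 1"
    using \<open>finite Q\<close> by (intro kraft_inequality) auto
  then show ?thesis using inj by (simp add: sum.reindex K_eq_length_shortest_prog[OF U])
qed

section \<open>Coverings by prefixes of low complexity\<close>

lemma hausdorff_eq_0I:
  assumes "\<And>n \<epsilon>. \<epsilon> > 0 \<Longrightarrow> \<exists>C. A \<subseteq> (\<Union>\<sigma>\<in>C. cyl \<sigma>) \<and> (\<forall>\<sigma>\<in>C. length \<sigma> \<ge> n) \<and>
      (\<Sum>\<^sub>\<infinity>\<sigma>\<in>C. ennreal (f (2 powr (- real (length \<sigma>))))) \<le> ennreal \<epsilon>"
  shows "hausdorff f A = 0"
proof -
  have "(INF C \<in> {C. A \<subseteq> (\<Union>\<sigma>\<in>C. cyl \<sigma>) \<and> (\<forall>\<sigma>\<in>C. length \<sigma> \<ge> n)}.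
      (\<Sum>\<^sub>\<infinity>\<sigma>\<in>C. ennreal (f (2 powr (- real (length \<sigma>)))))) \<le> 0" for n
  proof (rule ennreal_le_epsilon)
    fix \<epsilon> :: real assume "0 < \<epsilon>"
    with assms[of \<epsilon> n] show "(INF C \<in> {C. A \<subseteq> (\<Union>\<sigma>\<in>C. cyl \<sigma>) \<and> (\<forall>\<sigma>\<in>C. length \<sigma> \<ge> n)}.
      (\<Sum>\<^sub>\<infinity>\<sigma>\<in>C. ennreal (f (2 powr (- real (length \<sigma>)))))) \<le> 0 + ennreal \<epsilon>"
      by (auto intro: INF_lower2)
  qed
  then have "hausdorff f A \<le> 0" unfolding hausdorff_def by (rule SUP_least)
  then show ?thesis by simp
qed

lemma infsum_le_by_kraft:
  assumes U: "optimal_pf U" and "0 \<le> \<epsilon>"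
    and le: "\<And>\<sigma>. \<sigma> \<in> C \<Longrightarrow> g \<sigma> \<le> \<epsilon> * (1/2) ^ K U \<sigma>"
  shows "(\<Sum>\<^sub>\<infinity>\<sigma>\<in>C. ennreal (g \<sigma>)) \<le> ennreal \<epsilon>"
proof (rule infsum_le_finite_sums[OF nonneg_summable_on_complete])
  fix F assume F: "finite F" "F \<subseteq> C"
  have "(\<Sum>\<sigma>\<in>F. ennreal (g \<sigma>)) \<le> (\<Sum>\<sigma>\<in>F. ennreal (\<epsilon> * (1/2) ^ K U \<sigma>))"
    using le F(2) by (intro sum_mono ennreal_leI) auto
  also have "\<dots> = ennreal (\<epsilon> * (\<Sum>\<sigma>\<in>F. (1/2) ^ K U \<sigma>))"
    using \<open>0 \<le> \<epsilon>\<close> by (simp add: sum_distrib_left)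
  also have "\<dots> \<le> ennreal \<epsilon>"
    using kraft_inequality_K[OF U F(1)] \<open>0 \<le> \<epsilon>\<close>
    by (intro ennreal_leI) (simp add: mult_left_le)
  finally show "(\<Sum>\<sigma>\<in>F. ennreal (g \<sigma>)) \<le> ennreal \<epsilon>" .
qed simp

lemma liminf_le_if_frequently:
  fixes X :: "nat \<Rightarrow> 'a :: complete_linorder"
  assumes "\<exists>\<^sub>F m in sequentially. X m \<le> C"
  shows "liminf X \<le> C"
proof (rule ccontr)
  assume "\<not> liminf X \<le> C"
  then have "\<forall>\<^sub>F m in sequentially. C < X m"
    using le_Liminf_iff[of "liminf X" sequentially X] by auto
  with assms show False by (simp add: frequently_def eventually_mono not_le)
qed

lemma dim_less_frequently:
  assumes "dim U x < ereal t"
  shows "\<exists>m>N. real (K U (restr x m)) < t * real m"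
proof -
  obtain m where "m > N" "ereal (real (K U (restr x m)) / real m) < ereal t"
    using liminf_upper_bound assms unfolding dim_def by blast
  then show ?thesis by (auto simp: field_simps)
qed

lemma ereal_less_exists_gap:
  fixes s :: real
  assumes "0 < s" and "d < ereal s"
  shows "\<exists>k::nat. d < ereal (s - s / (real k + 2))"
proof (cases d)
  case (real r)
  obtain k :: nat where "s / (s - r) < real k" using reals_Archimedean2 by blast
  then have "s / (real k + 2) < s - r"
    using real assms by (simp add: field_simps)
  then show ?thesis using real by (intro exI[of _ k]) simp
qed (use assms in auto)

lemma eventually_powr_neg_less:
  assumes "c > 0" and "\<epsilon> > 0"
  shows "eventually (\<lambda>m::nat. (2::real) powr (- c * real m) < \<epsilon>) sequentially"
proof -
  have "(2::real) powr (- c) < 1" using assms(1) by (simp add: powr_less_one)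
  then have "(\<lambda>m::nat. (2 powr (- c)) ^ m) \<longlonglongrightarrow> (0::real)" by (intro LIMSEQ_power_zero) auto
  moreover have "2 powr (- c * real m) = (2 powr (- c)) ^ m" for m
    by (simp add: powr_realpow[symmetric] powr_powr mult.commute)
  ultimately show ?thesis using assms(2) by (simp add: order_tendsto_iff)
qed

lemma powr_neg_nat: "(2::real) powr (- real m) = (1/2) ^ m"
  by (simp add: powr_minus powr_realpow power_one_over inverse_eq_divide)

lemma D_lt_subset_low_complexity_cyls:
  assumes "0 < s"
  shows "D_lt U s \<subseteq>
    (\<Union>\<sigma>\<in>{\<sigma>. \<exists>k. N k \<le> length \<sigma> \<and> real (K U \<sigma>) < (s - s / (real k + 2)) * real (length \<sigma>)}. cyl \<sigma>)"
proof
  fix x assume "x \<in> D_lt U s"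
  then obtain k where "dim U x < ereal (s - s / (real k + 2))"
    using ereal_less_exists_gap[OF assms] unfolding D_lt_def by blast
  then obtain m where "N k < m" "real (K U (restr x m)) < (s - s / (real k + 2)) * real m"
    using dim_less_frequently by blast
  then have "restr x m \<in> {\<sigma>. \<exists>k. N k \<le> length \<sigma> \<and>
      real (K U \<sigma>) < (s - s / (real k + 2)) * real (length \<sigma>)}"
    unfolding restr_def by (auto intro!: exI[of _ k])
  moreover have "x \<in> cyl (restr x m)" by (simp add: cyl_def restr_def)
  ultimately show "x \<in> (\<Union>\<sigma>\<in>{\<sigma>. \<exists>k. N k \<le> length \<sigma> \<and>
      real (K U \<sigma>) < (s - s / (real k + 2)) * real (length \<sigma>)}. cyl \<sigma>)" by blast
qed

lemma gauge_dyadic_le_weight: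
  assumes f: "\<And>x. 0 < x \<Longrightarrow> x < \<delta> \<Longrightarrow> f x \<le> x powr b" and "(1/2::real) ^ m < \<delta>"
    and "2 powr (- (b - a) * real m) < \<epsilon>" and "real k < a * real m"
  shows "f (2 powr (- real m)) \<le> \<epsilon> * (1/2) ^ k"
proof -
  have "f (2 powr (- real m)) \<le> (2 powr (- real m)) powr b"
    using f[of "2 powr (- real m)"] assms(2) by (simp add: powr_neg_nat)
  also have "\<dots> = 2 powr (- a * real m) * 2 powr (- (b - a) * real m)"
    by (simp add: powr_powr powr_add[symmetric] algebra_simps)
  also have "\<dots> \<le> 2 powr (- real k) * \<epsilon>"
    using assms(3,4) by (intro mult_mono) auto
  finally show ?thesis by (simp add: powr_neg_nat mult.commute)
qed

lemma hausdorff_D_lt_eq_0: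
  assumes U: "optimal_pf U" and s: "0 < s"
    and le: "\<And>r. 0 < r \<Longrightarrow> r < s \<Longrightarrow> le_star f (\<lambda>x. x powr r)"
  shows "hausdorff f (D_lt U s) = 0"
proof (rule hausdorff_eq_0I)
  fix n :: nat and \<epsilon> :: real assume "\<epsilon> > 0"
  \<comment> \<open>\<open>a k\<close> increases to \<open>s\<close> and bounds the complexity rate of the covering prefixes;
    the gauge bound is used with the exponent \<open>b k\<close> strictly between \<open>a k\<close> and \<open>s\<close>.\<close>
  define a where "a k = s - s / (real k + 2)" for k :: nat
  define b where "b k = s - s / (2 * (real k + 2))" for k :: nat
  have ab: "0 < a k" "a k < b k" "b k < s" for k
    using s by (auto simp: a_def b_def field_simps add_pos_nonneg add_nonneg_pos)
  have "\<forall>k. le_star f (\<lambda>x. x powr b k)"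
    using le order.strict_trans[OF ab(1,2)] ab(3) by blast
  then obtain \<delta> where \<delta>: "\<And>k. \<delta> k > 0" "\<And>k x. 0 < x \<Longrightarrow> x < \<delta> k \<Longrightarrow> f x \<le> x powr b k"
    unfolding le_star_def choice_iff by blast
  have "\<forall>k. \<forall>\<^sub>F m in sequentially. n \<le> m \<and> (1/2::real) ^ m < \<delta> k \<and> 2 powr (- (b k - a k) * real m) < \<epsilon>"
  proof
    fix k
    have "(\<lambda>m::nat. (1/2::real) ^ m) \<longlonglongrightarrow> 0" by (rule LIMSEQ_power_zero) simp
    then have "\<forall>\<^sub>F m in sequentially. (1/2::real) ^ m < \<delta> k" using \<delta>(1) by (simp add: order_tendsto_iff)
    moreover have "\<forall>\<^sub>F m in sequentially. 2 powr (- (b k - a k) * real m) < \<epsilon>"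
      using ab(2) \<open>\<epsilon> > 0\<close> by (intro eventually_powr_neg_less) auto
    ultimately show "\<forall>\<^sub>F m in sequentially. n \<le> m \<and> (1/2::real) ^ m < \<delta> k \<and> 2 powr (- (b k - a k) * real m) < \<epsilon>"
      by (auto simp: eventually_conj_iff)
  qed
  then obtain N where N: "\<And>k m. m \<ge> N k \<Longrightarrow>
      n \<le> m \<and> (1/2::real) ^ m < \<delta> k \<and> 2 powr (- (b k - a k) * real m) < \<epsilon>"
    unfolding eventually_sequentially choice_iff by blast
  define C where "C = {\<sigma>. \<exists>k. N k \<le> length \<sigma> \<and> real (K U \<sigma>) < a k * real (length \<sigma>)}"
  have "D_lt U s \<subseteq> (\<Union>\<sigma>\<in>C. cyl \<sigma>)"
    unfolding C_def a_def by (rule D_lt_subset_low_complexity_cyls[OF s])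
  moreover have "f (2 powr (- real (length \<sigma>))) \<le> \<epsilon> * (1/2) ^ K U \<sigma>" if \<sigma>: "\<sigma> \<in> C" for \<sigma>
  proof -
    obtain k where k: "N k \<le> length \<sigma>" "real (K U \<sigma>) < a k * real (length \<sigma>)"
      using \<sigma> by (auto simp: C_def)
    with N[OF k(1)] show ?thesis by (intro gauge_dyadic_le_weight[where a = "a k", OF \<delta>(2)]) auto
  qed
  then have "(\<Sum>\<^sub>\<infinity>\<sigma>\<in>C. ennreal (f (2 powr (- real (length \<sigma>))))) \<le> ennreal \<epsilon>"
    using \<open>\<epsilon> > 0\<close> by (intro infsum_le_by_kraft[OF U]) auto
  moreover have "\<forall>\<sigma>\<in>C. length \<sigma> \<ge> n" using N by (auto simp: C_def)
  ultimately show "\<exists>C. D_lt U s \<subseteq> (\<Union>\<sigma>\<in>C. cyl \<sigma>) \<and> (\<forall>\<sigma>\<in>C. length \<sigma> \<ge> n) \<and>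
      (\<Sum>\<^sub>\<infinity>\<sigma>\<in>C. ennreal (f (2 powr (- real (length \<sigma>))))) \<le> ennreal \<epsilon>"
    by blast
qed

section \<open>The mass distribution principle\<close>

definition zero_outside :: "nat set \<Rightarrow> seq set" where
  "zero_outside F = {x. \<forall>i. i \<notin> F \<longrightarrow> \<not> x i}"

definition admissible :: "nat set \<Rightarrow> bool list \<Rightarrow> bool" where
  "admissible F \<tau> \<longleftrightarrow> (\<forall>i<length \<tau>. i \<notin> F \<longrightarrow> \<not> \<tau> ! i)"

definition free_below :: "nat set \<Rightarrow> nat \<Rightarrow> nat" where
  "free_below F l = card ({..<l} \<inter> F)"

text \<open>The uniform distribution on \<^term>\<open>zero_outside F\<close>, evaluated on cylinders.\<close>

definition mass :: "nat set \<Rightarrow> bool list \<Rightarrow> real" where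
  "mass F \<tau> = (if admissible F \<tau> then (1/2) ^ free_below F (length \<tau>) else 0)"

lemma free_below_Suc: "free_below F (Suc l) = free_below F l + (if l \<in> F then 1 else 0)"
  by (simp add: free_below_def lessThan_Suc)

lemma free_below_mono: "l \<le> l' \<Longrightarrow> free_below F l \<le> free_below F l'"
  unfolding free_below_def by (intro card_mono) auto

lemma admissible_snoc: "admissible F (\<tau> @ [b]) \<longleftrightarrow> admissible F \<tau> \<and> (length \<tau> \<notin> F \<longrightarrow> \<not> b)"
  by (auto simp: admissible_def nth_append less_Suc_eq)

lemma mass_Nil: "mass F [] = 1"
  by (simp add: mass_def admissible_def free_below_def)

lemma mass_nonneg: "0 \<le> mass F \<tau>"
  by (simp add: mass_def)

lemma mass_snoc_split: "mass F \<tau> = mass F (\<tau> @ [False]) + mass F (\<tau> @ [True])"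
  by (auto simp: mass_def admissible_snoc free_below_Suc)

lemma mass_antimono:
  assumes "prefix \<sigma> \<tau>"
  shows "mass F \<tau> \<le> mass F \<sigma>"
proof (cases "admissible F \<tau>")
  case True
  from assms obtain zs where "\<tau> = \<sigma> @ zs" by (auto simp: prefix_def)
  have "admissible F \<sigma>" unfolding admissible_def
  proof (intro allI impI)
    fix i assume "i < length \<sigma>" "i \<notin> F"
    moreover have "i < length \<tau>" using \<open>\<tau> = \<sigma> @ zs\<close> \<open>i < length \<sigma>\<close> by simp
    ultimately have "\<not> \<tau> ! i" using True by (simp add: admissible_def)
    then show "\<not> \<sigma> ! i" using \<open>\<tau> = \<sigma> @ zs\<close> \<open>i < length \<sigma>\<close> by (simp add: nth_append)
  qed
  moreover have "free_below F (length \<sigma>) \<le> free_below F (length \<tau>)"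
    using assms by (intro free_below_mono prefix_length_le)
  ultimately show ?thesis using True by (simp add: mass_def power_decreasing)
qed (simp add: mass_def)

lemma cyl_Nil: "cyl [] = UNIV"
  by (simp add: cyl_def)

lemma cyl_snoc_subset: "cyl (\<tau> @ [b]) \<subseteq> cyl \<tau>"
  by (auto simp: cyl_def nth_append)

lemma prefix_if_cyl:
  assumes "x \<in> cyl \<tau>" "x \<in> cyl \<sigma>" "length \<sigma> \<le> length \<tau>"
  shows "prefix \<sigma> \<tau>"
proof -
  have "take (length \<sigma>) \<tau> = \<sigma>"
    using assms by (intro nth_equalityI) (auto simp: cyl_def)
  then show ?thesis by (metis take_is_prefix)
qed

lemma admissible_imp_zero_outside_cyl:
  assumes "admissible F \<tau>"
  shows "(\<lambda>i. i < length \<tau> \<and> \<tau> ! i) \<in> zero_outside F \<inter> cyl \<tau>"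
  using assms by (auto simp: zero_outside_def cyl_def admissible_def)

lemma mass_le_sum_if_prefix_mem:
  assumes "finite T" "\<sigma> \<in> T" "prefix \<sigma> \<tau>"
  shows "mass F \<tau> \<le> (\<Sum>\<sigma>\<in>{\<sigma>\<in>T. prefix \<sigma> \<tau> \<or> prefix \<tau> \<sigma>}. mass F \<sigma>)"
proof -
  have "mass F \<tau> \<le> mass F \<sigma>" using assms(3) by (rule mass_antimono)
  also have "\<dots> \<le> (\<Sum>\<sigma>\<in>{\<sigma>\<in>T. prefix \<sigma> \<tau> \<or> prefix \<tau> \<sigma>}. mass F \<sigma>)"
    using assms by (intro member_le_sum) (auto simp: mass_nonneg)
  finally show ?thesis .
qed

lemma mass_le_sum_cover:
  assumes "finite T" and "\<forall>\<sigma>\<in>T. length \<sigma> \<le> length \<tau> + n"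
    and "zero_outside F \<inter> cyl \<tau> \<subseteq> (\<Union>\<sigma>\<in>T. cyl \<sigma>)"
  shows "mass F \<tau> \<le> (\<Sum>\<sigma>\<in>{\<sigma>\<in>T. prefix \<sigma> \<tau> \<or> prefix \<tau> \<sigma>}. mass F \<sigma>)"
  using assms(2,3)
proof (induction n arbitrary: \<tau>)
  case 0
  show ?case
  proof (cases "admissible F \<tau>")
    case True
    let ?x = "\<lambda>i. i < length \<tau> \<and> \<tau> ! i"
    have x: "?x \<in> zero_outside F \<inter> cyl \<tau>" by (rule admissible_imp_zero_outside_cyl[OF True])
    then obtain \<sigma> where \<sigma>: "\<sigma> \<in> T" "?x \<in> cyl \<sigma>" using 0(2) by blast
    moreover have "length \<sigma> \<le> length \<tau>" using 0(1) \<sigma>(1) by simp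
    ultimately have "prefix \<sigma> \<tau>" using x prefix_if_cyl by blast
    then show ?thesis by (rule mass_le_sum_if_prefix_mem[OF \<open>finite T\<close> \<sigma>(1)])
  qed (simp add: mass_def sum_nonneg mass_nonneg)
next
  case (Suc n)
  show ?case
  proof (cases "\<exists>\<sigma>\<in>T. prefix \<sigma> \<tau>")
    case True
    then show ?thesis using mass_le_sum_if_prefix_mem[OF \<open>finite T\<close>] by blast
  next
    case False
    define C where "C b = {\<sigma>\<in>T. prefix (\<tau> @ [b]) \<sigma>}" for b
    have "{\<sigma>\<in>T. prefix \<sigma> (\<tau> @ [b]) \<or> prefix (\<tau> @ [b]) \<sigma>} = C b" for b
      using False by (auto simp: C_def)
    moreover have "zero_outside F \<inter> cyl (\<tau> @ [b]) \<subseteq> (\<Union>\<sigma>\<in>T. cyl \<sigma>)" for b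
      using Suc.prems(2) cyl_snoc_subset by blast
    ultimately have child: "mass F (\<tau> @ [b]) \<le> (\<Sum>\<sigma>\<in>C b. mass F \<sigma>)" for b
      using Suc.IH[of "\<tau> @ [b]"] Suc.prems(1) by simp
    have "C False \<inter> C True = {}"
      by (auto simp: C_def dest: prefix_same_cases)
    have "mass F \<tau> \<le> (\<Sum>\<sigma>\<in>C False. mass F \<sigma>) + (\<Sum>\<sigma>\<in>C True. mass F \<sigma>)"
      using child mass_snoc_split[of F \<tau>] by (metis add_mono)
    also have "\<dots> = (\<Sum>\<sigma>\<in>C False \<union> C True. mass F \<sigma>)"
      using \<open>C False \<inter> C True = {}\<close> \<open>finite T\<close> by (simp add: C_def sum.union_disjoint)
    also have "\<dots> \<le> (\<Sum>\<sigma>\<in>{\<sigma>\<in>T. prefix \<sigma> \<tau> \<or> prefix \<tau> \<sigma>}. mass F \<sigma>)"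
      using \<open>finite T\<close> by (intro sum_mono2) (auto simp: C_def mass_nonneg dest: append_prefixD)
    finally show ?thesis .
  qed
qed

lemma mass_distribution:
  assumes "finite T" and "zero_outside F \<subseteq> (\<Union>\<sigma>\<in>T. cyl \<sigma>)"
  shows "1 \<le> (\<Sum>\<sigma>\<in>T. mass F \<sigma>)"
  using mass_le_sum_cover[of T "[]" "Max (length ` T)" F] assms by (simp add: mass_Nil cyl_Nil)

lemma compact_zero_outside: "compact (zero_outside F)"
proof -
  have "zero_outside F = PiE UNIV (\<lambda>i. if i \<in> F then UNIV else {False})"
    by (auto simp: zero_outside_def PiE_def Pi_def)
  moreover have "compactin (product_topology (\<lambda>i. euclidean) UNIV)
      (PiE UNIV (\<lambda>i::nat. if i \<in> F then UNIV else {False::bool}))"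
    by (subst compactin_PiE) (auto intro: finite_imp_compact)
  ultimately show ?thesis by (simp add: euclidean_product_topology)
qed

lemma open_cyl: "open (cyl \<sigma>)"
proof -
  have "cyl \<sigma> = PiE UNIV (\<lambda>i. if i < length \<sigma> then {\<sigma> ! i} else UNIV)"
    by (auto simp: cyl_def PiE_def Pi_def)
  moreover have "open (PiE UNIV (\<lambda>i. if i < length \<sigma> then {\<sigma> ! i} else UNIV))"
    by (rule open_PiE) (auto intro: finite_subset[of _ "{..<length \<sigma>}"] open_discrete)
  ultimately show ?thesis by simp
qed

lemma hausdorff_ge_if_mass_bound:
  assumes c: "c > 0" and bound: "\<And>l. c * (1/2) ^ free_below F l \<le> f (2 powr (- real l))"
    and "zero_outside F \<subseteq> A"
  shows "ennreal c \<le> hausdorff f A"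
proof -
  have f_nonneg: "0 \<le> f (2 powr (- real l))" for l
    by (rule order_trans[OF _ bound[of l]]) (use c in simp)
  have "ennreal c \<le> (\<Sum>\<^sub>\<infinity>\<sigma>\<in>C. ennreal (f (2 powr (- real (length \<sigma>)))))"
    if "A \<subseteq> (\<Union>\<sigma>\<in>C. cyl \<sigma>)" for C
  proof -
    from that assms(3) have "zero_outside F \<subseteq> (\<Union>\<sigma>\<in>C. cyl \<sigma>)" by blast
    then obtain T where T: "T \<subseteq> C" "finite T" "zero_outside F \<subseteq> (\<Union>\<sigma>\<in>T. cyl \<sigma>)"
      by (rule compactE_image[OF compact_zero_outside open_cyl])
    have "c \<le> c * (\<Sum>\<sigma>\<in>T. mass F \<sigma>)" using mass_distribution[OF T(2,3)] c by simp
    also have "\<dots> = (\<Sum>\<sigma>\<in>T. c * mass F \<sigma>)" by (simp add: sum_distrib_left)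
    also have "\<dots> \<le> (\<Sum>\<sigma>\<in>T. f (2 powr (- real (length \<sigma>))))"
      using bound f_nonneg by (intro sum_mono) (simp add: mass_def)
    finally have "ennreal c \<le> (\<Sum>\<sigma>\<in>T. ennreal (f (2 powr (- real (length \<sigma>)))))"
      using f_nonneg by (simp add: ennreal_leI)
    also have "\<dots> \<le> (\<Sum>\<^sub>\<infinity>\<sigma>\<in>C. ennreal (f (2 powr (- real (length \<sigma>)))))"
      unfolding nonneg_infsum_complete[OF zero_le] using T(1,2) by (intro SUP_upper) auto
    finally show ?thesis .
  qed
  then have "ennreal c \<le> (INF C \<in> {C. A \<subseteq> (\<Union>\<sigma>\<in>C. cyl \<sigma>) \<and> (\<forall>\<sigma>\<in>C. length \<sigma> \<ge> 0)}.
      (\<Sum>\<^sub>\<infinity>\<sigma>\<in>C. ennreal (f (2 powr (- real (length \<sigma>))))))"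
    by (intro INF_greatest) auto
  also have "\<dots> \<le> hausdorff f A" unfolding hausdorff_def by (rule SUP_upper) simp
  finally show ?thesis .
qed

definition blocks :: "(nat \<Rightarrow> nat) \<Rightarrow> (nat \<Rightarrow> nat) \<Rightarrow> nat set" where
  "blocks a h = (\<Union>j. {a j..<a j + h j})"

locale block_seq =
  fixes a h :: "nat \<Rightarrow> nat"
  assumes a_0: "a 0 = 0" and block_le: "\<And>j. a j + h j \<le> a (Suc j)"
    and a_less: "\<And>j. a j < a (Suc j)"
begin

lemma strict_mono_a: "strict_mono a"
  using a_less by (rule strict_monoI_Suc)

lemma block_index_exists: "\<exists>j. a j \<le> l \<and> l < a (Suc j)"
proof -
  have "l < a (Suc l)"
    using strict_mono_imp_increasing[OF strict_mono_a, of "Suc l"] by simp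
  then have ex: "\<exists>j. l < a (Suc j)" ..
  define j where "j = (LEAST j. l < a (Suc j))"
  have "l < a (Suc j)" unfolding j_def using ex by (rule LeastI_ex)
  moreover have "a j \<le> l"
  proof (cases j)
    case (Suc j')
    then have "\<not> l < a (Suc j')" unfolding j_def by (metis lessI not_less_Least)
    then show ?thesis using Suc by simp
  qed (simp add: a_0)
  ultimately show ?thesis by blast
qed

lemma mem_blocks_iff:
  assumes "a j \<le> i" "i < a (Suc j)"
  shows "i \<in> blocks a h \<longleftrightarrow> i < a j + h j"
proof
  assume "i \<in> blocks a h"
  then obtain j' where j': "a j' \<le> i" "i < a j' + h j'" by (auto simp: blocks_def)
  have "j' = j"
  proof (rule ccontr)
    assume "j' \<noteq> j"
    then consider "Suc j' \<le> j" | "Suc j \<le> j'" by linarith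
    then show False
    proof cases
      case 1
      then have "a (Suc j') \<le> a j" using strict_mono_a by (simp add: strict_mono_less_eq)
      then show False using j' assms block_le[of j'] by linarith
    next
      case 2
      then have "a (Suc j) \<le> a j'" using strict_mono_a by (simp add: strict_mono_less_eq)
      then show False using j' assms by linarith
    qed
  qed
  then show "i < a j + h j" using j' by simp
next
  assume "i < a j + h j"
  then show "i \<in> blocks a h" using assms(1) unfolding blocks_def by (intro UN_I[of j]) auto
qed

lemma free_below_in_block:
  "k \<le> h j \<Longrightarrow> free_below (blocks a h) (a j + k) = free_below (blocks a h) (a j) + k"
proof (induction k)
  case (Suc k)
  then have "a j + k \<in> blocks a h" unfolding blocks_def by (intro UN_I[of j]) auto
  with Suc show ?case by (simp add: free_below_Suc)
qed simp

lemma mass_bound_blocks: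
  fixes g :: "nat \<Rightarrow> real"
  assumes antimono: "\<And>n m. n \<le> m \<Longrightarrow> g m \<le> g n" and half: "\<And>n. g n \<le> 2 * g (Suc n)"
    and c0: "c \<le> g 0" and c_block: "\<And>j. c * (1/2) ^ h j \<le> g (a (Suc j))" and "c > 0"
  shows "c * (1/2) ^ free_below (blocks a h) l \<le> g l"
proof (induction l)
  case 0 then show ?case using c0 by (simp add: free_below_def)
next
  case (Suc l)
  show ?case
  proof (cases "l \<in> blocks a h")
    case True
    then have "c * (1/2) ^ free_below (blocks a h) (Suc l) = (c * (1/2) ^ free_below (blocks a h) l) / 2"
      by (simp add: free_below_Suc)
    also have "\<dots> \<le> g (Suc l)" using Suc.IH half[of l] by simp
    finally show ?thesis .
  next
    case False
    obtain j where j: "a j \<le> l" "l < a (Suc j)" using block_index_exists by blast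
    then have "a j + h j \<le> l" using False mem_blocks_iff[OF j] by simp
    have "h j \<le> free_below (blocks a h) (a j + h j)" using free_below_in_block[of "h j" j] by simp
    also have "\<dots> \<le> free_below (blocks a h) (Suc l)"
      using \<open>a j + h j \<le> l\<close> by (intro free_below_mono) simp
    finally have "h j \<le> free_below (blocks a h) (Suc l)" .
    then have "c * (1/2) ^ free_below (blocks a h) (Suc l) \<le> c * (1/2) ^ h j"
      using \<open>c > 0\<close> by (intro mult_left_mono power_decreasing) auto
    also have "\<dots> \<le> g (a (Suc j))" by (rule c_block)
    also have "\<dots> \<le> g (Suc l)" using j(2) by (intro antimono) simp
    finally show ?thesis .
  qed
qed

lemma restr_in_zero_outside_blocks:
  assumes "x \<in> zero_outside (blocks a h)"
  shows "restr x (a (Suc j)) = restr x (a j + h j) @ replicate (a (Suc j) - (a j + h j)) False"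
proof -
  have "\<not> x i" if "a j + h j \<le> i" "i < a (Suc j)" for i
  proof -
    have "i \<notin> blocks a h" using mem_blocks_iff[of j i] that by simp
    then show ?thesis using assms by (simp add: zero_outside_def)
  qed
  then have "map x [a j + h j..<a (Suc j)] = replicate (a (Suc j) - (a j + h j)) False"
    by (intro replicate_eqI) auto
  moreover have "[0..<a (Suc j)] = [0..<a j + h j] @ [a j + h j..<a (Suc j)]"
    using upt_add_eq_append[of 0 "a j + h j" "a (Suc j) - (a j + h j)"] block_le[of j] by simp
  ultimately show ?thesis by (simp add: restr_def)
qed

lemma zero_outside_blocks_subset_D_lt:
  assumes K: "\<And>w m c. length w < 2 ^ c \<Longrightarrow> m < 2 ^ c \<Longrightarrow>
      K U (w @ replicate m False) \<le> Suc (3 * c + length w) + d"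
    and small: "\<And>j. real (2 + a j + d) + 3 * real (floorlog 2 (a (Suc j))) \<le> \<epsilon> * real (a (Suc j))"
    and h: "\<And>j. real (h j) \<le> r * real (a (Suc j)) + 1"
    and "r + \<epsilon> < s"
  shows "zero_outside (blocks a h) \<subseteq> D_lt U s"
proof
  fix x assume x: "x \<in> zero_outside (blocks a h)"
  have "ereal (real (K U (restr x (a (Suc j)))) / real (a (Suc j))) \<le> ereal (r + \<epsilon>)" for j
  proof -
    let ?m = "a (Suc j)"
    have m: "?m < 2 ^ floorlog 2 ?m" by (simp add: floorlog_leD)
    have "K U (restr x ?m) \<le> Suc (3 * floorlog 2 ?m + (a j + h j)) + d"
      unfolding restr_in_zero_outside_blocks[OF x, of j]
      using K[of "restr x (a j + h j)" "floorlog 2 ?m"] m block_le[of j] by (simp add: restr_def)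
    then have "real (K U (restr x ?m)) \<le> (r + \<epsilon>) * real ?m"
      using small[of j] h[of j] by (simp add: algebra_simps)
    moreover have "0 < ?m" using a_less[of j] by simp
    ultimately show ?thesis by (simp add: divide_le_eq)
  qed
  moreover have "j \<le> a (Suc j)" for j
    using strict_mono_imp_increasing[OF strict_mono_a, of "Suc j"] by simp
  ultimately have "\<exists>\<^sub>F m in sequentially. ereal (real (K U (restr x m)) / real m) \<le> ereal (r + \<epsilon>)"
    unfolding frequently_sequentially by (meson order_trans)
  then have "dim U x \<le> ereal (r + \<epsilon>)" unfolding dim_def by (rule liminf_le_if_frequently)
  then show "x \<in> D_lt U s" using \<open>r + \<epsilon> < s\<close> by (simp add: D_lt_def le_less_trans)
qed

end

section \<open>Positive measure below the critical gauge\<close>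

lemma frequently_large_at_dyadic:
  fixes f :: "real \<Rightarrow> real"
  assumes mono: "mono_on {0<..} f" and r: "0 < r" and not_le: "\<not> le_star f (\<lambda>x. x powr r)"
  shows "\<exists>n\<ge>N. 2 powr (- r * (real n + 1)) \<le> f ((1/2) ^ n)"
proof -
  have "(1/2::real) ^ N > 0" by simp
  with not_le obtain x where x: "0 < x" "x < (1/2) ^ N" "\<not> f x \<le> x powr r"
    unfolding le_star_def by blast
  obtain k where "(1/2::real) ^ k < x" using real_arch_pow_inv[OF x(1), of "1/2"] by auto
  moreover have "(1/2::real) ^ Suc k \<le> (1/2) ^ k" by (intro power_decreasing) auto
  ultimately have ex: "\<exists>k. (1/2::real) ^ Suc k < x" by (meson le_less_trans)
  define n where "n = (LEAST k. (1/2::real) ^ Suc k < x)"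
  have n: "(1/2::real) ^ Suc n < x" unfolding n_def using ex by (rule LeastI_ex)
  have "N \<le> n"
  proof (rule ccontr)
    assume "\<not> N \<le> n"
    then have "(1/2::real) ^ N \<le> (1/2) ^ Suc n" by (intro power_decreasing) auto
    then show False using n x(2) by linarith
  qed
  have "x \<le> (1/2) ^ n"
  proof (cases n)
    case 0
    have "(1/2::real) ^ N \<le> 1" by (simp add: power_le_one)
    then show ?thesis using x(2) 0 by simp
  next
    case (Suc k)
    then have "\<not> (1/2::real) ^ Suc k < x" unfolding n_def by (metis lessI not_less_Least)
    then show ?thesis using Suc by simp
  qed
  have "2 powr (- r * (real n + 1)) = ((1/2::real) ^ Suc n) powr r"
    by (simp only: powr_neg_nat[symmetric]) (simp add: powr_powr algebra_simps)
  also have "\<dots> \<le> x powr r" by (rule powr_mono2) (use n r in auto)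
  also have "\<dots> \<le> f ((1/2) ^ n)"
    using x mono_onD[OF mono, of x "(1/2) ^ n"] \<open>x \<le> (1/2) ^ n\<close> by simp
  finally show ?thesis using \<open>N \<le> n\<close> by blast
qed

lemma square_le_pow2: "4 \<le> d \<Longrightarrow> d * d \<le> (2::nat) ^ d"
proof (induction d rule: dec_induct)
  case (step d)
  then have "2 * d + 1 \<le> d * d" using mult_le_mono1[OF step(1), of d] by linarith
  then show ?case using step(3) by simp
qed simp

lemma floorlog_eventually_le:
  fixes \<epsilon> B :: real
  assumes "\<epsilon> > 0" "B \<ge> 0"
  shows "\<exists>N. \<forall>n\<ge>N. B + 3 * real (floorlog 2 n) \<le> \<epsilon> * real n"
proof -
  define T where "T = nat \<lceil>(B + 6) / \<epsilon>\<rceil> + 4"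
  have T: "(B + 6) / \<epsilon> \<le> real T" "4 \<le> T" unfolding T_def by linarith+
  have "B + 3 * real (floorlog 2 n) \<le> \<epsilon> * real n" if n: "2 ^ T \<le> n" for n
  proof -
    define d where "d = floorlog 2 n - 1"
    have "Suc T \<le> floorlog 2 n" using floorlog_ge_SucI[OF n] by simp
    then have d: "T \<le> d" "floorlog 2 n = Suc d" unfolding d_def by auto
    have "0 < (2::nat) ^ T" by simp
    then have "0 < n" using n by linarith
    then have "2 ^ d \<le> n" using floorlog_bounds[of n 2] d(2) by simp
    moreover have "d * d \<le> 2 ^ d" using d(1) T(2) by (intro square_le_pow2) simp
    ultimately have "real d * real d \<le> real n" by (metis of_nat_le_iff of_nat_mult order_trans)
    have "B + 6 \<le> \<epsilon> * real T" using T(1) assms(1) by (simp add: field_simps)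
    also have "\<dots> \<le> \<epsilon> * real d" using d(1) assms(1) by simp
    finally have "(B + 6) * real d \<le> \<epsilon> * real d * real d" by (intro mult_right_mono) auto
    also have "\<dots> \<le> \<epsilon> * real n" using \<open>real d * real d \<le> real n\<close> assms(1) by (simp add: mult.assoc)
    finally have "(B + 6) * real d \<le> \<epsilon> * real n" .
    moreover have "B + 3 * real (floorlog 2 n) \<le> (B + 6) * real d"
      using d T(2) mult_left_mono[of 1 "real d" B] assms(2) by (simp add: algebra_simps)
    ultimately show ?thesis by linarith
  qed
  then show ?thesis by blast
qed

lemma good_scale_exists:
  fixes f :: "real \<Rightarrow> real"
  assumes mono: "mono_on {0<..} f" and r: "0 < r" "r < 1"
    and not_le: "\<not> le_star f (\<lambda>x. x powr r)" and "\<epsilon> > 0"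
  shows "\<exists>n. p < n \<and> p + nat \<lceil>r * real n\<rceil> \<le> n \<and>
    real (2 + p + d) + 3 * real (floorlog 2 n) \<le> \<epsilon> * real n \<and> 2 powr (- r * (real n + 1)) \<le> f ((1/2) ^ n)"
proof -
  obtain N1 where N1: "\<And>n. n \<ge> N1 \<Longrightarrow> real (2 + p + d) + 3 * real (floorlog 2 n) \<le> \<epsilon> * real n"
    using floorlog_eventually_le[OF \<open>\<epsilon> > 0\<close>, of "real (2 + p + d)"] by auto
  define N2 where "N2 = nat \<lceil>(real p + 1) / (1 - r)\<rceil> + p + 1"
  obtain n where n: "n \<ge> max N1 N2" "2 powr (- r * (real n + 1)) \<le> f ((1/2) ^ n)"
    using frequently_large_at_dyadic[OF mono r(1) not_le] by blast
  have "(real p + 1) / (1 - r) \<le> real n" using n(1) unfolding N2_def by linarith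
  then have "real p + 1 \<le> (1 - r) * real n" using r by (simp add: field_simps)
  moreover have "real_of_int \<lceil>r * real n\<rceil> \<le> r * real n + 1" by linarith
  moreover have "0 \<le> r * real n" using r by simp
  ultimately have "real p + real (nat \<lceil>r * real n\<rceil>) \<le> real n" by (simp add: algebra_simps)
  then have "p + nat \<lceil>r * real n\<rceil> \<le> n" by linarith
  moreover have "p < n" using n(1) by (simp add: N2_def)
  ultimately show ?thesis using N1 n by auto
qed

lemma good_scale_sequence:
  fixes f :: "real \<Rightarrow> real"
  assumes "mono_on {0<..} f" and "0 < r" "r < 1"
    and "\<not> le_star f (\<lambda>x. x powr r)" and "\<epsilon> > 0"
  obtains a :: "nat \<Rightarrow> nat" where "a 0 = 0" and "\<And>j. a j < a (Suc j)"
    and "\<And>j. a j + nat \<lceil>r * real (a (Suc j))\<rceil> \<le> a (Suc j)"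
    and "\<And>j. real (2 + a j + d) + 3 * real (floorlog 2 (a (Suc j))) \<le> \<epsilon> * real (a (Suc j))"
    and "\<And>j. 2 powr (- r * (real (a (Suc j)) + 1)) \<le> f ((1/2) ^ a (Suc j))"
proof -
  define good where "good p n \<longleftrightarrow> p < n \<and> p + nat \<lceil>r * real n\<rceil> \<le> n \<and>
    real (2 + p + d) + 3 * real (floorlog 2 n) \<le> \<epsilon> * real n \<and> 2 powr (- r * (real n + 1)) \<le> f ((1/2) ^ n)"
    for p n
  have "\<exists>n. good p n" for p
    unfolding good_def by (rule good_scale_exists[OF assms])
  then obtain a where a: "\<And>j. (j = 0 \<longrightarrow> a j = 0) \<and> good (a j) (a (Suc j))"
    using dependent_nat_choice[of "\<lambda>j n. j = 0 \<longrightarrow> n = 0" "\<lambda>_. good"] by blast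
  show ?thesis
  proof (rule that)
    show "a 0 = 0" using a[of 0] by simp
  qed (use a in \<open>simp_all add: good_def\<close>)
qed

lemma dyadic_antimono:
  assumes "mono_on {0<..} f" "n \<le> m"
  shows "f ((1/2) ^ m) \<le> f ((1/2::real) ^ n)"
  by (rule mono_onD[OF assms(1)]) (use assms(2) in \<open>auto intro: power_decreasing\<close>)

lemma dyadic_doubling:
  assumes "antimono_on {0<..} (\<lambda>x. f x / x)"
  shows "f ((1/2::real) ^ n) \<le> 2 * f ((1/2) ^ Suc n)"
proof -
  have "f ((1/2) ^ n) / (1/2) ^ n \<le> f ((1/2) ^ Suc n) / (1/2::real) ^ Suc n"
    using monotone_onD[OF assms, of "(1/2) ^ Suc n" "(1/2) ^ n"] by (auto intro: power_decreasing)
  then show ?thesis by (simp add: field_simps)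
qed

lemma hausdorff_D_lt_pos:
  fixes f :: "real \<Rightarrow> real"
  assumes U: "optimal_pf U" and "s < 1" and r: "0 < r" "r < s"
    and mono: "mono_on {0<..} f" and anti: "antimono_on {0<..} (\<lambda>x. f x / x)"
    and pos: "\<And>x. x > 0 \<Longrightarrow> f x > 0" and not_le: "\<not> le_star f (\<lambda>x. x powr r)"
  shows "hausdorff f (D_lt U s) \<noteq> 0"
proof -
  obtain d where d: "\<And>w m c. length w < 2 ^ c \<Longrightarrow> m < 2 ^ c \<Longrightarrow>
      K U (w @ replicate m False) \<le> Suc (3 * c + length w) + d"
    using K_padded_le[OF U] by blast
  define \<epsilon> where "\<epsilon> = (s - r) / 2"
  have \<epsilon>: "\<epsilon> > 0" "r + \<epsilon> < s" using r by (simp_all add: \<epsilon>_def field_simps)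
  have "r < 1" using r \<open>s < 1\<close> by simp
  obtain a where a: "a 0 = 0" "\<And>j. a j < a (Suc j)"
    "\<And>j. a j + nat \<lceil>r * real (a (Suc j))\<rceil> \<le> a (Suc j)"
    "\<And>j. real (2 + a j + d) + 3 * real (floorlog 2 (a (Suc j))) \<le> \<epsilon> * real (a (Suc j))"
    "\<And>j. 2 powr (- r * (real (a (Suc j)) + 1)) \<le> f ((1/2) ^ a (Suc j))"
    using good_scale_sequence[where d = d, OF mono r(1) \<open>r < 1\<close> not_le \<epsilon>(1)] by blast
  define h where "h j = nat \<lceil>r * real (a (Suc j))\<rceil>" for j
  interpret block_seq a h
    by standard (use a in \<open>simp_all add: h_def\<close>)
  have "real (h j) \<le> r * real (a (Suc j)) + 1" for j
    using r(1) by (simp add: h_def)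
  then have "zero_outside (blocks a h) \<subseteq> D_lt U s"
    by (intro zero_outside_blocks_subset_D_lt[OF d a(4) _ \<epsilon>(2)])
  moreover define c where "c = min (f 1) (2 powr (- r))"
  have "c > 0" using pos by (simp add: c_def)
  have "c * (1/2) ^ h j \<le> f ((1/2) ^ a (Suc j))" for j
  proof -
    have "(1/2::real) ^ h j \<le> 2 powr (- r * real (a (Suc j)))"
      unfolding powr_neg_nat[symmetric] h_def by simp linarith
    then have "c * (1/2) ^ h j \<le> 2 powr (- r) * 2 powr (- r * real (a (Suc j)))"
      using \<open>c > 0\<close> by (intro mult_mono) (auto simp: c_def)
    also have "\<dots> = 2 powr (- r * (real (a (Suc j)) + 1))" by (simp add: powr_add[symmetric] algebra_simps)
    also have "\<dots> \<le> f ((1/2) ^ a (Suc j))" by (rule a(5))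
    finally show ?thesis .
  qed
  then have "c * (1/2) ^ free_below (blocks a h) l \<le> f (2 powr (- real l))" for l
    using mass_bound_blocks[of "\<lambda>n. f ((1/2) ^ n)", OF dyadic_antimono[OF mono] dyadic_doubling[OF anti]
      _ _ \<open>c > 0\<close>] by (simp add: c_def powr_neg_nat)
  ultimately have "ennreal c \<le> hausdorff f (D_lt U s)"
    using hausdorff_ge_if_mass_bound \<open>c > 0\<close> by blast
  then show ?thesis using \<open>c > 0\<close> by auto
qed

lemma le_star_powr: "r \<le> t \<Longrightarrow> le_star (\<lambda>x. x powr t) (\<lambda>x. x powr r)"
  unfolding le_star_def by (intro exI[of _ 1]) (auto intro: powr_mono')

lemma not_le_star_powr:
  assumes "t < r"
  shows "\<not> le_star (\<lambda>x::real. x powr t) (\<lambda>x. x powr r)"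
proof
  assume "le_star (\<lambda>x. x powr t) (\<lambda>x. x powr r)"
  then obtain \<delta> where \<delta>: "\<delta> > 0" "\<And>x. 0 < x \<Longrightarrow> x < \<delta> \<Longrightarrow> x powr t \<le> x powr r"
    unfolding le_star_def by blast
  define x where "x = min (\<delta> / 2) (1 / 2)"
  have x: "0 < x" "x < \<delta>" "x < 1" using \<delta>(1) by (auto simp: x_def)
  have "x powr r < x powr t" using powr_less_mono'[OF x(1) x(3) assms] .
  then show False using \<delta>(2)[OF x(1,2)] by simp
qed

lemma mono_on_powr: "0 \<le> t \<Longrightarrow> mono_on {0<..} (\<lambda>x::real. x powr t)"
  by (rule mono_onI) (auto intro: powr_mono2)

lemma antimono_on_powr_div:
  assumes "t \<le> 1"
  shows "antimono_on {0<..} (\<lambda>x::real. x powr t / x)"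
proof (rule monotone_onI)
  fix x y :: real assume "x \<in> {0<..}" "y \<in> {0<..}" "x \<le> y"
  then show "y powr t / y \<le> x powr t / x"
    using powr_mono2'[of "t - 1" x y] assms by (simp add: powr_diff)
qed

lemma hausdorff_D_lt_eq_0_iff:
  fixes f :: "real \<Rightarrow> real"
  assumes "optimal_pf U" "0 < s" "s < 1"
    and "mono_on {0<..} f" "antimono_on {0<..} (\<lambda>x. f x / x)" "\<And>x. x > 0 \<Longrightarrow> f x > 0"
  shows "hausdorff f (D_lt U s) = 0 \<longleftrightarrow> (\<forall>r. 0 < r \<and> r < s \<longrightarrow> le_star f (\<lambda>x. x powr r))"
  using hausdorff_D_lt_eq_0[OF assms(1,2)] hausdorff_D_lt_pos[OF assms(1,3) _ _ assms(4-6)] by blast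

lemma hausdorff_powr_D_lt_eq_0_iff:
  assumes U: "optimal_pf U" and s: "0 < s" "s < 1" and "0 \<le> t"
  shows "hausdorff (\<lambda>x. x powr t) (D_lt U s) = 0 \<longleftrightarrow> s \<le> t"
proof
  assume "hausdorff (\<lambda>x. x powr t) (D_lt U s) = 0"
  show "s \<le> t"
  proof (rule ccontr)
    assume "\<not> s \<le> t"
    then have "0 < (t + s) / 2" "(t + s) / 2 < s" "t < (t + s) / 2" "t \<le> 1" using \<open>0 \<le> t\<close> s by auto
    then have "hausdorff (\<lambda>x. x powr t) (D_lt U s) \<noteq> 0"
      using hausdorff_D_lt_pos[OF U s(2), of "(t + s) / 2" "\<lambda>x. x powr t"] not_le_star_powr
        mono_on_powr[OF \<open>0 \<le> t\<close>] antimono_on_powr_div by simp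
    with \<open>hausdorff (\<lambda>x. x powr t) (D_lt U s) = 0\<close> show False by simp
  qed
qed (use hausdorff_D_lt_eq_0[OF U s(1)] le_star_powr in auto)

theorem mainTheorem5:
  fixes s :: real and U :: recf
  assumes "0 < s" and "s < 1" and "optimal_pf U"
  shows "(\<forall>f. gauge f \<and> antimono_on {0<..} (\<lambda>x. f x / x) \<longrightarrow>
            (hausdorff f (D_lt U s) = 0 \<longleftrightarrow>
             (\<forall>r. 0 < r \<and> r < s \<longrightarrow> le_star f (\<lambda>x. x powr r))))
         \<and> hdim (D_lt U s) = s
         \<and> hausdorff (\<lambda>x. x powr s) (D_lt U s) = 0"
proof (intro conjI allI impI)
  fix f :: "real \<Rightarrow> real"
  assume "gauge f \<and> antimono_on {0<..} (\<lambda>x. f x / x)"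
  then show "hausdorff f (D_lt U s) = 0 \<longleftrightarrow> (\<forall>r. 0 < r \<and> r < s \<longrightarrow> le_star f (\<lambda>x. x powr r))"
    using hausdorff_D_lt_eq_0_iff[OF assms(3,1,2)] by (simp add: gauge_def)
next
  have "{t. t \<ge> 0 \<and> hausdorff (\<lambda>x. x powr t) (D_lt U s) = 0} = {s..}"
    using hausdorff_powr_D_lt_eq_0_iff[OF assms(3,1,2)] \<open>0 < s\<close> by auto
  then show "hdim (D_lt U s) = s" by (simp add: hdim_def)
next
  show "hausdorff (\<lambda>x. x powr s) (D_lt U s) = 0"
    using hausdorff_powr_D_lt_eq_0_iff[OF assms(3,1,2)] \<open>0 < s\<close> by simp
qed

end
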